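(* Let $i,j,k$ be integers with $j>i>0$ and $0\le k<i$. Then: (1) if the virtual link diagram $(i,j-i,k)$ has exactly one component, so does $(i,j,k)$; (2) $(i,j,k)$ can be modified into $(i,j-i,k)$ by $i(i-1)/2$ crossing changes (together with generalized Reidemeister moves / isotopy).
   Context: Braid conventions: braids on $i$ strands are drawn horizontally, oriented left to right, with positions $1,\dots,i$ numbered from top to bottom, and words are read left to right. The generator $\sigma_m$ is a classical (positive) crossing at which the strand in position $m$ moves to position $m+1$, passing over the strand moving from position $m+1$ to position $m$. A virtual crossing is drawn with a small circle and has no over/under information. For $j\ge1$, $VB^1_{i,j}$ is the virtual braid obtained from $(\sigma_1\cdots\sigma_{i-1})^j$ by replacing the crossings of the first (left-most) block $\sigma_1\cdots\sigma_{i-1}$ by virtual crossings. $B_k=\sigma_k\sigma_{k-1}\cdots\sigma_1$, with $B_0$ trivial. $(i,j,k)$ is the closure of $VB^1_{i,j}B_k$. A crossing change exchanges over- and understrand at a classical crossing. Generalized Reidemeister moves are the classical moves R1–R3, the virtual moves VR1–VR3 and the mixed move MR. *)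

theory Defs
  imports Main
begin

text \<open>A letter is either a classical crossing
  Sig m True = sigma_m (positive), Sig m False = sigma_m inverse,
  or a virtual crossing Vir m between positions m and m+1.
  A (closed) virtual braid diagram is a pair (n, w): the closure of the word w on n strands.\<close>

datatype vletter = Sig nat bool | Vir nat

fun letter_idx :: "vletter \<Rightarrow> nat" where
  "letter_idx (Sig m e) = m"
| "letter_idx (Vir m) = m"

type_synonym vbraid = "nat \<times> vletter list"

definition wf_word :: "nat \<Rightarrow> vletter list \<Rightarrow> bool" where
  "wf_word n w \<longleftrightarrow> (\<forall>x\<in>set w. 1 \<le> letter_idx x \<and> letter_idx x < n)"

definition wf_braid :: "vbraid \<Rightarrow> bool" where
  "wf_braid D \<longleftrightarrow> fst D \<ge> 1 \<and> wf_word (fst D) (snd D)"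

definition swap_at :: "nat \<Rightarrow> nat \<Rightarrow> nat" where
  "swap_at m p = (if p = m then Suc m else if p = Suc m then m else p)"

definition word_perm :: "vletter list \<Rightarrow> nat \<Rightarrow> nat" where
  "word_perm w p = foldl (\<lambda>q l. swap_at (letter_idx l) q) p w"

text \<open>Number of components of the closure: number of orbits of the induced permutation.\<close>

definition num_components :: "vbraid \<Rightarrow> nat" where
  "num_components D =
     card ((\<lambda>p. {(word_perm (snd D) ^^ t) p | t. True}) ` {1..fst D})"

text \<open>Local relations of virtual braids (each realised by generalized Reidemeister
  moves or planar isotopy of the closure).\<close>

inductive local_rel :: "vletter list \<Rightarrow> vletter list \<Rightarrow> bool" where
  R2:  "local_rel [Sig m e, Sig m (\<not> e)] []"
| VR2: "local_rel [Vir m, Vir m] []"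
| R3:  "local_rel [Sig m e, Sig (Suc m) e, Sig m e] [Sig (Suc m) e, Sig m e, Sig (Suc m) e]"
| VR3: "local_rel [Vir m, Vir (Suc m), Vir m] [Vir (Suc m), Vir m, Vir (Suc m)]"
| MR:  "local_rel [Vir m, Sig (Suc m) e, Vir m] [Vir (Suc m), Sig m e, Vir (Suc m)]"
| far: "Suc (letter_idx x) < letter_idx y \<or> Suc (letter_idx y) < letter_idx x
        \<Longrightarrow> local_rel [x, y] [y, x]"

text \<open>One elementary move between closed virtual braid diagrams: virtual braid
  relations, conjugation, classical/virtual stabilization and Kamada's exchange move.\<close>

inductive vmove :: "vbraid \<Rightarrow> vbraid \<Rightarrow> bool" where
  local: "local_rel l r \<Longrightarrow> wf_braid (n, u @ l @ v) \<Longrightarrow> wf_braid (n, u @ r @ v)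
          \<Longrightarrow> vmove (n, u @ l @ v) (n, u @ r @ v)"
| conj: "wf_braid (n, a @ b) \<Longrightarrow> vmove (n, a @ b) (n, b @ a)"
| stab: "wf_braid (n, w) \<Longrightarrow> vmove (n, w) (Suc n, w @ [Sig n e])"
| vstab: "wf_braid (n, w) \<Longrightarrow> vmove (n, w) (Suc n, w @ [Vir n])"
| exch: "wf_braid (n, b1) \<Longrightarrow> wf_braid (n, b2) \<Longrightarrow>
         vmove (Suc n, b1 @ [Sig n False] @ b2 @ [Sig n True])
               (Suc n, b1 @ [Vir n] @ b2 @ [Vir n])"

definition gr_equiv :: "vbraid \<Rightarrow> vbraid \<Rightarrow> bool" where
  "gr_equiv = (\<lambda>D E. vmove D E \<or> vmove E D)\<^sup>*\<^sup>*"

inductive crossing_change :: "vbraid \<Rightarrow> vbraid \<Rightarrow> bool" where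
  "wf_braid (n, u @ [Sig m e] @ v) \<Longrightarrow>
   crossing_change (n, u @ [Sig m e] @ v) (n, u @ [Sig m (\<not> e)] @ v)"

inductive modify_cc :: "nat \<Rightarrow> vbraid \<Rightarrow> vbraid \<Rightarrow> bool" where
  refl: "modify_cc 0 D D"
| move: "gr_equiv D D' \<Longrightarrow> modify_cc c D' E \<Longrightarrow> modify_cc c D E"
| cc:   "crossing_change D D' \<Longrightarrow> modify_cc c D' E \<Longrightarrow> modify_cc (Suc c) D E"

definition sigma_block :: "nat \<Rightarrow> vletter list" where
  "sigma_block i = map (\<lambda>m. Sig m True) [1..<i]"

definition virt_block :: "nat \<Rightarrow> vletter list" where
  "virt_block i = map Vir [1..<i]"

definition VB1 :: "nat \<Rightarrow> nat \<Rightarrow> vletter list" where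
  "VB1 i j = virt_block i @ concat (replicate (j - 1) (sigma_block i))"

definition Bk :: "nat \<Rightarrow> vletter list" where
  "Bk k = map (\<lambda>m. Sig m True) (rev [1..<Suc k])"

definition ijk :: "nat \<Rightarrow> nat \<Rightarrow> nat \<Rightarrow> vbraid" where
  "ijk i j k = (i, VB1 i j @ Bk k)"

end

theory Submission
  imports Defs
begin

text \<open>Since \<open>j > i\<close>, the word of \<open>(i,j,k)\<close> is that of \<open>(i,j-i,k)\<close> with the full twist
  \<open>\<Delta>\<^sup>2 = (\<sigma>\<^sub>1\<cdots>\<sigma>\<^sub>i\<^sub>-\<^sub>1)\<^sup>i\<close> inserted after the virtual block. The full twist is a pure braid, so it
  does not change the permutation of the closure, hence not the number of components. In the
  braid group \<open>\<Delta>\<^sup>2 = \<Delta> \<Delta>'\<close>, where \<open>\<Delta>\<close> and \<open>\<Delta>'\<close> are two positive words of length \<open>i(i-1)/2\<close>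
  for Garside's half twist, one the reverse of the other. Changing all crossings of \<open>\<Delta>'\<close> turns
  it into \<open>\<Delta>\<^sup>-\<^sup>1\<close>, which cancels \<open>\<Delta>\<close>.\<close>

definition pos_word :: "nat list \<Rightarrow> vletter list" where
  "pos_word ms = map (\<lambda>m. Sig m True) ms"

definition neg_word :: "nat list \<Rightarrow> vletter list" where
  "neg_word ms = map (\<lambda>m. Sig m False) ms"

definition word_power :: "vletter list \<Rightarrow> nat \<Rightarrow> vletter list" where
  "word_power w k = concat (replicate k w)"

definition full_twist :: "nat \<Rightarrow> vletter list" where
  "full_twist n = word_power (sigma_block n) n"

text \<open>\<open>pos_word (garside_idx n)\<close> is Garside's half twist
  \<open>(\<sigma>\<^sub>1\<cdots>\<sigma>\<^sub>n\<^sub>-\<^sub>1)(\<sigma>\<^sub>1\<cdots>\<sigma>\<^sub>n\<^sub>-\<^sub>2)\<cdots>\<sigma>\<^sub>1\<close>.\<close>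

fun garside_idx :: "nat \<Rightarrow> nat list" where
  "garside_idx 0 = []"
| "garside_idx (Suc n) = [1..<Suc n] @ garside_idx n"

lemma pos_word_simps [simp]:
  "pos_word [] = []"
  "pos_word (m # ms) = Sig m True # pos_word ms"
  "pos_word (ms @ ms') = pos_word ms @ pos_word ms'"
  by (simp_all add: pos_word_def)

lemma neg_word_simps [simp]:
  "neg_word [] = []"
  "neg_word (m # ms) = Sig m False # neg_word ms"
  "neg_word (ms @ ms') = neg_word ms @ neg_word ms'"
  by (simp_all add: neg_word_def)

lemma sigma_block_eq_pos_word: "sigma_block n = pos_word [1..<n]"
  by (simp add: sigma_block_def pos_word_def)

lemma VB1_eq_word_power: "VB1 i j = virt_block i @ word_power (sigma_block i) (j - 1)"
  by (simp add: VB1_def word_power_def)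

lemma sigma_block_Suc: "0 < n \<Longrightarrow> sigma_block (Suc n) = sigma_block n @ [Sig n True]"
  by (simp add: sigma_block_def)

lemma word_power_0 [simp]: "word_power w 0 = []"
  by (simp add: word_power_def)

lemma word_power_Suc: "word_power w (Suc k) = w @ word_power w k"
  by (simp add: word_power_def)

lemma word_power_Suc_right: "word_power w (Suc k) = word_power w k @ w"
  by (simp add: word_power_def replicate_append_same[symmetric] del: replicate_append_same)

lemma word_power_add: "word_power w (k + l) = word_power w k @ word_power w l"
  by (simp add: word_power_def replicate_add)

lemma set_garside_idx [simp]: "set (garside_idx n) = {1..<n}"
  by (induction n) (auto simp del: upt_Suc)

lemma length_garside_idx: "length (garside_idx n) = n * (n - 1) div 2"
proof -
  have "2 * length (garside_idx n) = n * (n - 1)"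
  proof (induction n)
    case (Suc n)
    then show ?case by (cases n) simp_all
  qed simp
  then show ?thesis by simp
qed

lemma wf_word_simps [simp]:
  "wf_word n []"
  "wf_word n (x # w) \<longleftrightarrow> 1 \<le> letter_idx x \<and> letter_idx x < n \<and> wf_word n w"
  "wf_word n (w @ w') \<longleftrightarrow> wf_word n w \<and> wf_word n w'"
  by (auto simp: wf_word_def)

lemma wf_word_pos_word: "wf_word n (pos_word ms) \<longleftrightarrow> (\<forall>m\<in>set ms. 1 \<le> m \<and> m < n)"
  by (induction ms) auto

lemma wf_word_neg_word: "wf_word n (neg_word ms) \<longleftrightarrow> (\<forall>m\<in>set ms. 1 \<le> m \<and> m < n)"
  by (induction ms) auto

lemma wf_word_sigma_block: "N \<le> n \<Longrightarrow> wf_word n (sigma_block N)"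
  by (auto simp: sigma_block_eq_pos_word wf_word_pos_word)

lemma wf_word_word_power: "wf_word n w \<Longrightarrow> wf_word n (word_power w k)"
  by (induction k) (auto simp: word_power_Suc)

definition braid_step :: "nat \<Rightarrow> vletter list \<Rightarrow> vletter list \<Rightarrow> bool" where
  "braid_step n w w' \<longleftrightarrow> wf_word n w \<and> wf_word n w' \<and>
     (\<exists>u l r v. (local_rel l r \<or> local_rel r l) \<and> w = u @ l @ v \<and> w' = u @ r @ v)"

definition braid_eq :: "nat \<Rightarrow> vletter list \<Rightarrow> vletter list \<Rightarrow> bool" where
  "braid_eq n = (braid_step n)\<^sup>*\<^sup>*"

lemma braid_eq_refl: "braid_eq n w w"
  by (simp add: braid_eq_def)

lemma braid_eq_trans [trans]: "braid_eq n a b \<Longrightarrow> braid_eq n b c \<Longrightarrow> braid_eq n a c"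
  unfolding braid_eq_def by (rule rtranclp_trans)

lemma braid_eq_local_rel:
  assumes "local_rel l r \<or> local_rel r l" "wf_word n l" "wf_word n r"
  shows "braid_eq n l r"
proof -
  have "braid_step n l r"
    unfolding braid_step_def using assms by (metis append.left_neutral append.right_neutral)
  then show ?thesis by (simp add: braid_eq_def)
qed

lemma braid_step_append_cong:
  assumes "braid_step n w w'" "wf_word n a" "wf_word n b"
  shows "braid_step n (a @ w @ b) (a @ w' @ b)"
proof -
  obtain u l r v where "local_rel l r \<or> local_rel r l" "w = u @ l @ v" "w' = u @ r @ v"
    using assms(1) by (auto simp: braid_step_def)
  then have "\<exists>u l r v. (local_rel l r \<or> local_rel r l) \<and>
      a @ w @ b = u @ l @ v \<and> a @ w' @ b = u @ r @ v"
    by (intro exI[of _ "a @ u"] exI[of _ l] exI[of _ r] exI[of _ "v @ b"]) simp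
  moreover have "wf_word n (a @ w @ b)" "wf_word n (a @ w' @ b)"
    using assms by (simp_all add: braid_step_def)
  ultimately show ?thesis
    unfolding braid_step_def by blast
qed

lemma braid_eq_append_cong:
  "braid_eq n w w' \<Longrightarrow> wf_word n a \<Longrightarrow> wf_word n b \<Longrightarrow> braid_eq n (a @ w @ b) (a @ w' @ b)"
  unfolding braid_eq_def
  by (induction rule: rtranclp_induct)
    (auto intro: rtranclp.rtrancl_into_rtrancl braid_step_append_cong)

lemma braid_eq_append_left: "braid_eq n w w' \<Longrightarrow> wf_word n a \<Longrightarrow> braid_eq n (a @ w) (a @ w')"
  using braid_eq_append_cong[of n w w' a "[]"] by simp

lemma braid_eq_append_right: "braid_eq n w w' \<Longrightarrow> wf_word n b \<Longrightarrow> braid_eq n (w @ b) (w' @ b)"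
  using braid_eq_append_cong[of n w w' "[]" b] by simp

lemma braid_step_vmove:
  assumes "1 \<le> n" "braid_step n w w'"
  shows "vmove (n, w) (n, w') \<or> vmove (n, w') (n, w)"
proof -
  obtain u l r v where "local_rel l r \<or> local_rel r l" and "w = u @ l @ v" "w' = u @ r @ v"
    using assms(2) by (auto simp: braid_step_def)
  moreover have "wf_braid (n, w)" "wf_braid (n, w')"
    using assms by (auto simp: braid_step_def wf_braid_def)
  ultimately show ?thesis
    using vmove.local[of l r n u v] vmove.local[of r l n u v] by auto
qed

lemma braid_eq_gr_equiv:
  assumes "1 \<le> n" "braid_eq n w w'"
  shows "gr_equiv (n, w) (n, w')"
  using assms(2) unfolding braid_eq_def gr_equiv_def
  by (induction rule: rtranclp_induct)
    (auto intro: rtranclp.rtrancl_into_rtrancl dest: braid_step_vmove[OF assms(1)])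

lemma word_perm_append: "word_perm (a @ b) = word_perm b \<circ> word_perm a"
  by (simp add: word_perm_def fun_eq_iff)

lemma word_perm_Nil: "word_perm [] = id"
  by (simp add: word_perm_def fun_eq_iff)

lemma local_rel_word_perm: "local_rel l r \<Longrightarrow> word_perm l = word_perm r"
  by (induction rule: local_rel.induct) (auto simp: word_perm_def swap_at_def fun_eq_iff)

lemma braid_eq_word_perm: "braid_eq n w w' \<Longrightarrow> word_perm w = word_perm w'"
  unfolding braid_eq_def braid_step_def
  by (induction rule: rtranclp_induct) (auto simp: word_perm_append dest: local_rel_word_perm)

lemma word_perm_neg_word: "word_perm (neg_word ms) = word_perm (pos_word ms)"
  by (simp add: word_perm_def pos_word_def neg_word_def foldl_map fun_eq_iff)

lemma pos_word_commute_far: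
  assumes "wf_word n (pos_word (x # ys))" "\<forall>y\<in>set ys. Suc x < y \<or> Suc y < x"
  shows "braid_eq n (pos_word (x # ys)) (pos_word (ys @ [x]))"
  using assms
proof (induction ys)
  case Nil
  then show ?case by (simp add: braid_eq_refl)
next
  case (Cons y ys)
  have swap: "braid_eq n [Sig x True, Sig y True] [Sig y True, Sig x True]"
    using Cons.prems by (intro braid_eq_local_rel) (auto intro: local_rel.far)
  have "braid_eq n (pos_word (x # y # ys)) (Sig y True # pos_word (x # ys))"
    using braid_eq_append_right[OF swap, of "pos_word ys"] Cons.prems
    by (simp add: wf_word_pos_word)
  also have "braid_eq n \<dots> (pos_word (y # ys @ [x]))"
    using braid_eq_append_left[OF Cons.IH, of "[Sig y True]"] Cons.prems
    by (simp add: wf_word_pos_word)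
  finally show ?case by simp
qed

lemma Sig_Suc_past_sigma_block:
  assumes "1 \<le> m" "m + 2 \<le> N" "N \<le> n"
  shows "braid_eq n (Sig (Suc m) True # sigma_block N) (sigma_block N @ [Sig m True])"
proof -
  define A where "A = pos_word [1..<m]"
  define R where "R = pos_word [Suc (Suc m)..<N]"
  have "[1..<N] = [1..<m] @ [m..<N]"
    using assms upt_add_eq_append[of 1 m "N - m"] by simp
  also have "[m..<N] = m # Suc m # [Suc (Suc m)..<N]"
    using assms by (simp add: upt_conv_Cons)
  finally have split: "sigma_block N = A @ [Sig m True, Sig (Suc m) True] @ R"
    by (simp add: sigma_block_eq_pos_word A_def R_def)
  have wf: "wf_word n A" "wf_word n R"
    using assms by (auto simp: A_def R_def wf_word_pos_word)
  have commute_A: "braid_eq n (Sig (Suc m) True # A) (A @ [Sig (Suc m) True])"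
    using pos_word_commute_far[of n "Suc m" "[1..<m]"] assms by (auto simp: A_def wf_word_pos_word)
  have commute_R: "braid_eq n (Sig m True # R) (R @ [Sig m True])"
    using pos_word_commute_far[of n m "[Suc (Suc m)..<N]"] assms
    by (auto simp: R_def wf_word_pos_word)
  have "braid_eq n (Sig (Suc m) True # sigma_block N)
      (A @ [Sig (Suc m) True, Sig m True, Sig (Suc m) True] @ R)"
    using braid_eq_append_right[OF commute_A, of "[Sig m True, Sig (Suc m) True] @ R"] wf assms
    by (simp add: split)
  also have "braid_eq n \<dots> (A @ [Sig m True, Sig (Suc m) True, Sig m True] @ R)"
    using assms wf
    by (intro braid_eq_append_cong braid_eq_local_rel) (auto intro: local_rel.R3)
  also have "braid_eq n \<dots> (sigma_block N @ [Sig m True])"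
    using braid_eq_append_left[OF commute_R, of "A @ [Sig m True, Sig (Suc m) True]"] wf assms
    by (simp add: split)
  finally show ?thesis .
qed

lemma pos_word_Suc_past_sigma_block:
  assumes "\<forall>m\<in>set ms. 1 \<le> m \<and> m + 2 \<le> N" "N \<le> n"
  shows "braid_eq n (pos_word (map Suc ms) @ sigma_block N) (sigma_block N @ pos_word ms)"
  using assms
proof (induction ms)
  case Nil
  then show ?case by (simp add: braid_eq_refl)
next
  case (Cons m ms)
  have "braid_eq n (pos_word (map Suc (m # ms)) @ sigma_block N)
      (Sig (Suc m) True # sigma_block N @ pos_word ms)"
    using braid_eq_append_left[OF Cons.IH, of "[Sig (Suc m) True]"] Cons.prems by simp
  also have "braid_eq n \<dots> (sigma_block N @ pos_word (m # ms))"
  proof -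
    have "wf_word n (pos_word ms)"
      using Cons.prems by (auto simp: wf_word_pos_word)
    then show ?thesis
      using braid_eq_append_right[OF Sig_Suc_past_sigma_block] Cons.prems by simp
  qed
  finally show ?case .
qed

lemma sigma_block_Suc_power:
  assumes "k \<le> N" "N < n"
  shows "braid_eq n (word_power (sigma_block (Suc N)) k)
      (word_power (sigma_block N) k @ pos_word (rev [Suc N - k..<Suc N]))"
  using assms
proof (induction k)
  case 0
  then show ?case by (simp add: braid_eq_refl word_power_def)
next
  case (Suc k)
  have wf: "wf_word n (sigma_block (Suc N))" "wf_word n (word_power (sigma_block N) k)"
    using Suc.prems by (simp_all add: wf_word_sigma_block wf_word_word_power)
  have shift: "rev [Suc N - k..<Suc N] = map Suc (rev [N - k..<N])"
    using Suc.prems by (simp add: map_Suc_upt rev_map[symmetric] Suc_diff_le)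
  have "braid_eq n (word_power (sigma_block (Suc N)) (Suc k))
      (word_power (sigma_block N) k @ pos_word (rev [Suc N - k..<Suc N]) @ sigma_block (Suc N))"
    using braid_eq_append_right[OF Suc.IH wf(1)] Suc.prems by (simp add: word_power_Suc_right)
  also have "braid_eq n \<dots>
      (word_power (sigma_block N) k @ sigma_block (Suc N) @ pos_word (rev [N - k..<N]))"
    unfolding shift using Suc.prems wf
    by (intro braid_eq_append_left pos_word_Suc_past_sigma_block) auto
  also have "\<dots> = word_power (sigma_block N) (Suc k) @ pos_word (rev [Suc N - Suc k..<Suc N])"
    using Suc.prems by (simp add: sigma_block_Suc word_power_Suc_right upt_rec[of "N - k"])
  finally show ?case .
qed

lemma full_twist_eq_garside_square:
  assumes "N \<le> n"
  shows "braid_eq n (full_twist N) (pos_word (garside_idx N @ rev (garside_idx N)))"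
  using assms
proof (induction N)
  case 0
  then show ?case by (simp add: braid_eq_refl full_twist_def word_power_def)
next
  case (Suc N)
  have wf: "wf_word n (sigma_block (Suc N))" "wf_word n (pos_word (rev [1..<Suc N]))"
    using Suc.prems by (auto intro: wf_word_sigma_block simp: wf_word_pos_word)
  have "braid_eq n (full_twist (Suc N))
      (sigma_block (Suc N) @ full_twist N @ pos_word (rev [1..<Suc N]))"
    using braid_eq_append_left[OF sigma_block_Suc_power[of N N n] wf(1)] Suc.prems
    by (simp add: full_twist_def word_power_Suc)
  also have "braid_eq n \<dots> (sigma_block (Suc N) @ pos_word (garside_idx N @ rev (garside_idx N))
      @ pos_word (rev [1..<Suc N]))"
    using Suc wf by (intro braid_eq_append_cong) auto
  also have "\<dots> = pos_word (garside_idx (Suc N) @ rev (garside_idx (Suc N)))"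
    by (simp add: sigma_block_eq_pos_word)
  finally show ?case .
qed

lemma pos_neg_word_cancel:
  assumes "\<forall>m\<in>set ms. 1 \<le> m \<and> m < n"
  shows "braid_eq n (pos_word ms @ neg_word (rev ms)) []"
  using assms
proof (induction ms rule: rev_induct)
  case Nil
  then show ?case by (simp add: braid_eq_refl)
next
  case (snoc a ms)
  have cancel: "braid_eq n [Sig a True, Sig a False] []"
    using snoc.prems local_rel.R2[of a True] by (intro braid_eq_local_rel) auto
  have "braid_eq n (pos_word (ms @ [a]) @ neg_word (rev (ms @ [a])))
      (pos_word ms @ neg_word (rev ms))"
    using braid_eq_append_cong[OF cancel, of "pos_word ms" "neg_word (rev ms)"] snoc.prems
    by (simp add: wf_word_pos_word wf_word_neg_word)
  also have "braid_eq n \<dots> []"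
    using snoc by simp
  finally show ?case .
qed

lemma modify_cc_pos_to_neg_word:
  assumes "1 \<le> n" "wf_word n (u @ pos_word ms @ v)"
  shows "modify_cc (length ms) (n, u @ pos_word ms @ v) (n, u @ neg_word ms @ v)"
  using assms(2)
proof (induction ms arbitrary: u)
  case Nil
  then show ?case by (simp add: modify_cc.refl)
next
  case (Cons m ms)
  have "crossing_change (n, u @ [Sig m True] @ pos_word ms @ v)
      (n, u @ [Sig m (\<not> True)] @ pos_word ms @ v)"
    using assms(1) Cons.prems by (intro crossing_change.intros) (simp add: wf_braid_def)
  moreover have "modify_cc (length ms) (n, (u @ [Sig m False]) @ pos_word ms @ v)
      (n, (u @ [Sig m False]) @ neg_word ms @ v)"
    using Cons.IH[of "u @ [Sig m False]"] Cons.prems by simp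
  ultimately show ?case
    using modify_cc.cc by fastforce
qed

lemma modify_cc_gr_equiv: "modify_cc c D E \<Longrightarrow> gr_equiv E F \<Longrightarrow> modify_cc c D F"
proof (induction rule: modify_cc.induct)
  case (refl D)
  then show ?case by (rule modify_cc.move[OF _ modify_cc.refl])
next
  case (move D D' c E)
  then show ?case by (blast intro: modify_cc.move)
next
  case (cc D D' c E)
  then show ?case by (blast intro: modify_cc.cc)
qed

lemma word_perm_full_twist: "word_perm (full_twist n) = id"
proof -
  let ?D = "garside_idx n"
  have "word_perm (full_twist n) = word_perm (pos_word (?D @ rev ?D))"
    by (rule braid_eq_word_perm[OF full_twist_eq_garside_square[of n n]]) simp
  also have "\<dots> = word_perm (pos_word ?D @ neg_word (rev ?D))"
    by (simp add: word_perm_append word_perm_neg_word)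
  also have "\<dots> = word_perm []"
    by (rule braid_eq_word_perm[OF pos_neg_word_cancel[of _ n]]) simp
  finally show ?thesis by (simp add: word_perm_Nil)
qed

lemma num_components_remove_full_twist:
  "num_components (n, u @ full_twist n @ v) = num_components (n, u @ v)"
  by (simp add: num_components_def word_perm_append word_perm_full_twist)

lemma modify_cc_remove_full_twist:
  assumes "1 \<le> n" "wf_word n u" "wf_word n v"
  shows "modify_cc (n * (n - 1) div 2) (n, u @ full_twist n @ v) (n, u @ v)"
proof -
  let ?D = "garside_idx n"
  have wf_D: "wf_word n (pos_word ?D)" "wf_word n (pos_word (rev ?D))"
    by (auto simp: wf_word_pos_word)
  have "braid_eq n (u @ full_twist n @ v) (u @ pos_word ?D @ pos_word (rev ?D) @ v)"
    using braid_eq_append_cong[OF full_twist_eq_garside_square[of n n] assms(2,3)] by simp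
  then have to_square:
      "gr_equiv (n, u @ full_twist n @ v) (n, u @ pos_word ?D @ pos_word (rev ?D) @ v)"
    by (rule braid_eq_gr_equiv[OF assms(1)])
  have change: "modify_cc (n * (n - 1) div 2) (n, u @ pos_word ?D @ pos_word (rev ?D) @ v)
      (n, u @ pos_word ?D @ neg_word (rev ?D) @ v)"
    using modify_cc_pos_to_neg_word[OF assms(1), where u = "u @ pos_word ?D" and ms = "rev ?D"]
      assms wf_D by (simp add: length_garside_idx)
  have "braid_eq n (u @ pos_word ?D @ neg_word (rev ?D) @ v) (u @ v)"
    using braid_eq_append_cong[OF pos_neg_word_cancel assms(2,3)] by simp
  then have cancel: "gr_equiv (n, u @ pos_word ?D @ neg_word (rev ?D) @ v) (n, u @ v)"
    by (rule braid_eq_gr_equiv[OF assms(1)])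
  show ?thesis
    using modify_cc.move[OF to_square modify_cc_gr_equiv[OF change cancel]] .
qed

theorem lemma3p3:
  fixes i j k :: nat
  assumes "0 < i" and "i < j" and "k < i"
  shows "(num_components (ijk i (j - i) k) = 1 \<longrightarrow> num_components (ijk i j k) = 1)
       \<and> modify_cc (i * (i - 1) div 2) (ijk i j k) (ijk i (j - i) k)"
proof -
  define R where "R = word_power (sigma_block i) (j - i - 1) @ Bk k"
  have "j - 1 = i + (j - i - 1)"
    using assms by simp
  then have long: "ijk i j k = (i, virt_block i @ full_twist i @ R)"
    by (simp add: ijk_def VB1_eq_word_power R_def full_twist_def word_power_add)
  have short: "ijk i (j - i) k = (i, virt_block i @ R)"
    by (simp add: ijk_def VB1_eq_word_power R_def)
  have "wf_word i (virt_block i)"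
    by (auto simp: virt_block_def wf_word_def)
  moreover have "wf_word i (Bk k)"
    using assms by (auto simp: Bk_def wf_word_def)
  then have "wf_word i R"
    by (simp add: R_def wf_word_word_power wf_word_sigma_block)
  ultimately show ?thesis
    using modify_cc_remove_full_twist[of i "virt_block i" R] assms
    by (simp add: long short num_components_remove_full_twist)
qed

end
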